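(* Let $\mathcal A=\{a_\alpha:\alpha<\omega_1\}$ (enumerated without repetition) be a near-Luzin almost disjoint family of subsets of a countable set, let $n,k\in\omega$, and let $E$ be an uncountable family of pairwise disjoint $n$-element subsets of $\omega_1$. Then there are $s\neq t$ in $E$ such that $a_\alpha\cap a_\beta\not\subseteq k=\{0,\dots,k-1\}$ for all $\alpha\in s$ and $\beta\in t$.
   Context: An almost disjoint family is a collection of infinite sets whose pairwise intersections are finite. An uncountable almost disjoint family $\mathcal A$ is near-Luzin iff for all uncountable $\mathcal C,\mathcal D\subseteq\mathcal A$ the set $\bigcup\mathcal C\cap\bigcup\mathcal D$ is infinite. The natural number $k$ is identified with $\{0,\dots,k-1\}$ (the underlying countable set is taken to be $\omega$). *)

theory Defs
  imports Main "HOL-Library.Countable_Set"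
begin

definition almost_disjoint :: "nat set set \<Rightarrow> bool" where
  "almost_disjoint \<A> \<longleftrightarrow>
     (\<forall>a\<in>\<A>. infinite a) \<and> (\<forall>a\<in>\<A>. \<forall>b\<in>\<A>. a \<noteq> b \<longrightarrow> finite (a \<inter> b))"

definition near_luzin :: "nat set set \<Rightarrow> bool" where
  "near_luzin \<A> \<longleftrightarrow> almost_disjoint \<A> \<and> uncountable \<A> \<and>
     (\<forall>\<C> \<D>. \<C> \<subseteq> \<A> \<longrightarrow> \<D> \<subseteq> \<A> \<longrightarrow> uncountable \<C> \<longrightarrow> uncountable \<D> \<longrightarrow>
        infinite (\<Union>\<C> \<inter> \<Union>\<D>))"

definition is_omega1 :: "'i::wellorder itself \<Rightarrow> bool" where
  "is_omega1 _ \<longleftrightarrow> uncountable (UNIV :: 'i set) \<and> (\<forall>x::'i. countable {..<x})"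

end

theory Submission
  imports Defs
begin

text \<open>Call \<open>m \<ge> k\<close> popular in a family if it lies in uncountably many of its members. An
  uncountable family \<open>\<C>\<close> loses only countably many members when those containing an
  unpopular \<open>m \<ge> k\<close> are discarded, as there are only countably many such \<open>m\<close>. For
  uncountable \<open>\<C>, \<D>\<close> inside a near-Luzin family the two remainders still have a common
  point \<open>m \<ge> k\<close>, and it is popular in both \<open>\<C>\<close> and \<open>\<D>\<close>.

  Enumerate each \<open>s \<in> E\<close> increasingly as \<open>s\<^sub>0 < \<dots> < s\<^sub>n\<^sub>-\<^sub>1\<close>; by disjointness every
  \<open>s \<mapsto> a s\<^sub>i\<close> is injective on \<open>E\<close>. Applying the above once for each of the \<open>n\<^sup>2\<close> pairs
  \<open>(i, j)\<close> and keeping only the members containing the popular point shrinks \<open>E\<close> to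
  uncountable \<open>E\<^sub>1, E\<^sub>2\<close> with \<open>a s\<^sub>i \<inter> a t\<^sub>j \<not>\<subseteq> k\<close> for all \<open>s \<in> E\<^sub>1\<close>, \<open>t \<in> E\<^sub>2\<close> and all
  \<open>i, j\<close>.\<close>

lemma uncountable_subfamily_popular_points:
  fixes \<C> :: "nat set set"
  assumes "uncountable \<C>"
  obtains \<C>' where "\<C>' \<subseteq> \<C>" "uncountable \<C>'"
    "\<And>c m. c \<in> \<C>' \<Longrightarrow> m \<in> c \<Longrightarrow> k \<le> m \<Longrightarrow> uncountable {c\<in>\<C>. m \<in> c}"
proof
  define \<C>' where "\<C>' = {c\<in>\<C>. \<forall>m\<in>c. k \<le> m \<longrightarrow> uncountable {c\<in>\<C>. m \<in> c}}"
  have "\<C> - \<C>' = (\<Union>m\<in>{m. k \<le> m \<and> countable {c\<in>\<C>. m \<in> c}}. {c\<in>\<C>. m \<in> c})"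
    unfolding \<C>'_def by blast
  then have "countable (\<C> - \<C>')"
    by auto
  then have "uncountable (\<C> - (\<C> - \<C>'))"
    by (rule uncountable_minus_countable[OF assms])
  moreover have "\<C> - (\<C> - \<C>') = \<C>'"
    unfolding \<C>'_def by blast
  ultimately show "uncountable \<C>'"
    by simp
  show "\<C>' \<subseteq> \<C>"
    unfolding \<C>'_def by simp
  show "uncountable {c\<in>\<C>. m \<in> c}" if "c \<in> \<C>'" "m \<in> c" "k \<le> m" for c m
    using that unfolding \<C>'_def by auto
qed

lemma near_luzin_common_popular_point:
  assumes "near_luzin \<A>" "\<C> \<subseteq> \<A>" "\<D> \<subseteq> \<A>" "uncountable \<C>" "uncountable \<D>"
  shows "\<exists>m\<ge>k. uncountable {c\<in>\<C>. m \<in> c} \<and> uncountable {d\<in>\<D>. m \<in> d}"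
proof -
  obtain \<C>' where \<C>': "\<C>' \<subseteq> \<C>" "uncountable \<C>'"
      "\<And>c m. c \<in> \<C>' \<Longrightarrow> m \<in> c \<Longrightarrow> k \<le> m \<Longrightarrow> uncountable {c\<in>\<C>. m \<in> c}"
    using uncountable_subfamily_popular_points[OF assms(4)] by blast
  obtain \<D>' where \<D>': "\<D>' \<subseteq> \<D>" "uncountable \<D>'"
      "\<And>d m. d \<in> \<D>' \<Longrightarrow> m \<in> d \<Longrightarrow> k \<le> m \<Longrightarrow> uncountable {d\<in>\<D>. m \<in> d}"
    using uncountable_subfamily_popular_points[OF assms(5)] by blast
  have "\<C>' \<subseteq> \<A>" "\<D>' \<subseteq> \<A>"
    using assms(2,3) \<C>'(1) \<D>'(1) by auto
  then have "infinite (\<Union>\<C>' \<inter> \<Union>\<D>')"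
    using assms(1) \<C>'(2) \<D>'(2) unfolding near_luzin_def by simp
  then obtain m where "k \<le> m" "m \<in> \<Union>\<C>' \<inter> \<Union>\<D>'"
    unfolding infinite_nat_iff_unbounded_le by blast
  then obtain c d where "c \<in> \<C>'" "m \<in> c" "d \<in> \<D>'" "m \<in> d"
    by blast
  have "uncountable {c\<in>\<C>. m \<in> c}"
    using \<open>c \<in> \<C>'\<close> \<open>m \<in> c\<close> \<open>k \<le> m\<close> by (rule \<C>'(3))
  moreover have "uncountable {d\<in>\<D>. m \<in> d}"
    using \<open>d \<in> \<D>'\<close> \<open>m \<in> d\<close> \<open>k \<le> m\<close> by (rule \<D>'(3))
  ultimately show ?thesis
    using \<open>k \<le> m\<close> by blast
qed

lemma near_luzin_common_popular_point_indexed: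
  assumes "near_luzin \<A>"
    and "inj_on F X" "F ` X \<subseteq> \<A>" "uncountable X"
    and "inj_on G Y" "G ` Y \<subseteq> \<A>" "uncountable Y"
  shows "\<exists>m\<ge>k. uncountable {x\<in>X. m \<in> F x} \<and> uncountable {y\<in>Y. m \<in> G y}"
proof -
  have "uncountable (F ` X)" "uncountable (G ` Y)"
    using assms(2,4,5,7) countable_image_inj_on by blast+
  then obtain m where "m \<ge> k"
      and m: "uncountable {c\<in>F ` X. m \<in> c}" "uncountable {d\<in>G ` Y. m \<in> d}"
    using near_luzin_common_popular_point[OF assms(1,3,6)] by blast
  have "{c\<in>F ` X. m \<in> c} = F ` {x\<in>X. m \<in> F x}" "{d\<in>G ` Y. m \<in> d} = G ` {y\<in>Y. m \<in> G y}"
    by auto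
  with m have "uncountable {x\<in>X. m \<in> F x}" "uncountable {y\<in>Y. m \<in> G y}"
    by (auto dest: countable_image)
  with \<open>m \<ge> k\<close> show ?thesis
    by blast
qed

lemma near_luzin_uncountable_subfamilies_meeting_above:
  assumes "near_luzin \<A>" "uncountable E"
    and "\<forall>F\<in>\<Phi>. inj_on F E \<and> F ` E \<subseteq> \<A>" "finite P" "P \<subseteq> \<Phi> \<times> \<Phi>"
  shows "\<exists>E\<^sub>1 E\<^sub>2. E\<^sub>1 \<subseteq> E \<and> E\<^sub>2 \<subseteq> E \<and> uncountable E\<^sub>1 \<and> uncountable E\<^sub>2 \<and>
    (\<forall>s\<in>E\<^sub>1. \<forall>t\<in>E\<^sub>2. \<forall>(F, G)\<in>P. \<not> F s \<inter> G t \<subseteq> {..<k})"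
  using assms(4,5)
proof (induction P rule: finite_induct)
  case empty
  then show ?case
    using assms(2) by blast
next
  case (insert FG P)
  obtain F G where FG: "FG = (F, G)"
    by fastforce
  have "P \<subseteq> \<Phi> \<times> \<Phi>"
    using insert.prems by simp
  then obtain E\<^sub>1 E\<^sub>2 where E: "E\<^sub>1 \<subseteq> E" "E\<^sub>2 \<subseteq> E" "uncountable E\<^sub>1" "uncountable E\<^sub>2"
    and meet: "\<forall>s\<in>E\<^sub>1. \<forall>t\<in>E\<^sub>2. \<forall>(F, G)\<in>P. \<not> F s \<inter> G t \<subseteq> {..<k}"
    using insert.IH by auto
  have "F \<in> \<Phi>" "G \<in> \<Phi>"
    using insert.prems FG by auto
  then have F: "inj_on F E\<^sub>1" "F ` E\<^sub>1 \<subseteq> \<A>" and G: "inj_on G E\<^sub>2" "G ` E\<^sub>2 \<subseteq> \<A>"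
    using assms(3) E(1,2) by (meson inj_on_subset image_mono order_trans)+
  obtain m where "k \<le> m"
      and m: "uncountable {s\<in>E\<^sub>1. m \<in> F s}" "uncountable {t\<in>E\<^sub>2. m \<in> G t}"
    using near_luzin_common_popular_point_indexed[OF assms(1) F E(3) G E(4)] by auto
  have "\<forall>s\<in>{s\<in>E\<^sub>1. m \<in> F s}. \<forall>t\<in>{t\<in>E\<^sub>2. m \<in> G t}. \<forall>(F', G')\<in>insert FG P.
      \<not> F' s \<inter> G' t \<subseteq> {..<k}"
    using meet FG \<open>k \<le> m\<close> by auto
  moreover have "{s\<in>E\<^sub>1. m \<in> F s} \<subseteq> E" "{t\<in>E\<^sub>2. m \<in> G t} \<subseteq> E"
    using E(1,2) by auto
  ultimately show ?case
    using m by blast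
qed

lemma sorted_list_of_set_nth_mem:
  assumes "finite s" "i < card s"
  shows "sorted_list_of_set s ! i \<in> s"
  using assms nth_mem[of i "sorted_list_of_set s"] by simp

lemma sorted_list_of_set_nth_inj_on_disjoint:
  fixes E :: "'a::linorder set set"
  assumes "\<forall>s\<in>E. finite s \<and> card s = n" "\<forall>s\<in>E. \<forall>t\<in>E. s \<noteq> t \<longrightarrow> s \<inter> t = {}" "i < n"
  shows "inj_on (\<lambda>s. sorted_list_of_set s ! i) E"
proof (rule inj_onI)
  fix s t
  assume st: "s \<in> E" "t \<in> E" and eq: "sorted_list_of_set s ! i = sorted_list_of_set t ! i"
  have "sorted_list_of_set s ! i \<in> s \<inter> t"
    using sorted_list_of_set_nth_mem assms(1,3) st eq by (metis IntI)
  then show "s = t"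
    using assms(2) st by blast
qed

lemma in_finite_set_iff_sorted_list_of_set_nth:
  fixes s :: "'a::linorder set"
  assumes "finite s"
  shows "x \<in> s \<longleftrightarrow> (\<exists>i<card s. x = sorted_list_of_set s ! i)"
  using assms by (metis in_set_conv_nth length_sorted_list_of_set set_sorted_list_of_set)

theorem lemma1p3:
  fixes a :: "'i::wellorder \<Rightarrow> nat set"
    and E :: "'i set set"
    and n k :: nat
  assumes "is_omega1 TYPE('i)"
    and "inj a"
    and "near_luzin (range a)"
    and "uncountable E"
    and "\<forall>s\<in>E. finite s \<and> card s = n"
    and "\<forall>s\<in>E. \<forall>t\<in>E. s \<noteq> t \<longrightarrow> s \<inter> t = {}"
  shows "\<exists>s\<in>E. \<exists>t\<in>E. s \<noteq> t \<and>
           (\<forall>\<alpha>\<in>s. \<forall>\<beta>\<in>t. \<not> (a \<alpha> \<inter> a \<beta> \<subseteq> {..<k}))"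
proof -
  define A where "A i = a \<circ> (\<lambda>s. sorted_list_of_set s ! i)" for i
  have "inj_on (A i) E" if "i < n" for i
    unfolding A_def using sorted_list_of_set_nth_inj_on_disjoint[OF assms(5,6) that]
    by (rule comp_inj_on) (rule inj_on_subset[OF assms(2) subset_UNIV])
  then have \<Phi>: "\<forall>F\<in>A ` {..<n}. inj_on F E \<and> F ` E \<subseteq> range a"
    unfolding A_def by auto
  have fin: "finite (A ` {..<n} \<times> A ` {..<n})"
    by simp
  obtain E\<^sub>1 E\<^sub>2 where E: "E\<^sub>1 \<subseteq> E" "E\<^sub>2 \<subseteq> E" "uncountable E\<^sub>1" "uncountable E\<^sub>2"
    and meet: "\<forall>s\<in>E\<^sub>1. \<forall>t\<in>E\<^sub>2. \<forall>(F, G)\<in>A ` {..<n} \<times> A ` {..<n}. \<not> F s \<inter> G t \<subseteq> {..<k}"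
    using near_luzin_uncountable_subfamilies_meeting_above[OF assms(3,4) \<Phi> fin subset_refl, of k] by auto
  obtain s where s: "s \<in> E\<^sub>1"
    using E(3) by (metis countable_empty ex_in_conv)
  have "uncountable (E\<^sub>2 - {s})"
    using E(4) by simp
  then obtain t where t: "t \<in> E\<^sub>2" "t \<noteq> s"
    by (metis countable_empty ex_in_conv Diff_iff singletonI)
  have "\<not> a \<alpha> \<inter> a \<beta> \<subseteq> {..<k}" if \<alpha>: "\<alpha> \<in> s" and \<beta>: "\<beta> \<in> t" for \<alpha> \<beta>
  proof -
    have "finite s" "card s = n" "finite t" "card t = n"
      using s t(1) E(1,2) assms(5) by auto
    obtain i where "i < n" "\<alpha> = sorted_list_of_set s ! i"
      using \<alpha> unfolding in_finite_set_iff_sorted_list_of_set_nth[OF \<open>finite s\<close>] \<open>card s = n\<close> by blast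
    moreover obtain j where "j < n" "\<beta> = sorted_list_of_set t ! j"
      using \<beta> unfolding in_finite_set_iff_sorted_list_of_set_nth[OF \<open>finite t\<close>] \<open>card t = n\<close> by blast
    ultimately show ?thesis
      using meet s t(1) unfolding A_def by fastforce
  qed
  moreover have "s \<in> E" "t \<in> E"
    using s t(1) E(1,2) by auto
  ultimately show ?thesis
    using t(2) by blast
qed

end
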